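(* Let $U\in\mathcal U_n$. Among all part listings for $U$, the one that is minimal in graded reverse lexicographic order is the area sequence of a Dyck path of length $n$.
   Context: A unit interval order on $\{1,\dots,n\}$ is given by closed intervals $I_1,\dots,I_n$ of length $1$, numbered from left to right, with $i\prec j$ iff $I_i$ lies strictly to the left of $I_j$; $\mathcal U_n$ is the set of these. For a sequence $w=(w_1,\dots,w_n)$ of nonnegative integers, $P(w)$ is the poset on $\{1,\dots,n\}$ with $i\prec j$ iff $w_j-w_i\ge2$, or $w_j-w_i=1$ and $i<j$; $w$ is a part listing for $U$ if $P(w)$ is isomorphic to $U$ as a poset. Graded reverse lexicographic order on length-$n$ sequences of nonnegative integers: $(a_1,\dots,a_n)<(b_1,\dots,b_n)$ if $\sum a_i<\sum b_i$, or if the sums are equal and $a_j>b_j$ where $j$ is the first index where the sequences differ. Area sequences of Dyck paths of length $n$ are the sequences of nonnegative integers with $a_1=0$ and $a_i\le a_{i-1}+1$. *)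

theory Defs
  imports Complex_Main
begin

text \<open>A poset on \<open>{1..n}\<close> is represented by its strict relation \<open>nat \<Rightarrow> nat \<Rightarrow> bool\<close>.
  A sequence \<open>(w_1,...,w_n)\<close> is a list \<open>w\<close> of length n, with \<open>w_i = w ! (i-1)\<close>.\<close>

text \<open>Unit interval orders: intervals \<open>I_i = [x_i, x_i + 1]\<close>, numbered left to right
  (\<open>x_1 \<le> ... \<le> x_n\<close>), with \<open>i \<prec> j\<close> iff \<open>I_i\<close> lies strictly left of \<open>I_j\<close>.\<close>
definition unit_interval_order :: "nat \<Rightarrow> (nat \<Rightarrow> nat \<Rightarrow> bool) \<Rightarrow> bool" where
  "unit_interval_order n U \<longleftrightarrow>
     (\<exists>x :: nat \<Rightarrow> real.
        (\<forall>i j. 1 \<le> i \<and> i \<le> j \<and> j \<le> n \<longrightarrow> x i \<le> x j) \<and>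
        (\<forall>i j. U i j \<longleftrightarrow> (i \<in> {1..n} \<and> j \<in> {1..n} \<and> x i + 1 < x j)))"

definition P_of :: "nat list \<Rightarrow> nat \<Rightarrow> nat \<Rightarrow> bool" where
  "P_of w i j \<longleftrightarrow>
     i \<in> {1..length w} \<and> j \<in> {1..length w} \<and>
     (int (w ! (j-1)) - int (w ! (i-1)) \<ge> 2 \<or>
      (int (w ! (j-1)) - int (w ! (i-1)) = 1 \<and> i < j))"

definition poset_iso :: "nat \<Rightarrow> (nat \<Rightarrow> nat \<Rightarrow> bool) \<Rightarrow> (nat \<Rightarrow> nat \<Rightarrow> bool) \<Rightarrow> bool" where
  "poset_iso n P Q \<longleftrightarrow>
     (\<exists>f. bij_betw f {1..n} {1..n} \<and> (\<forall>i\<in>{1..n}. \<forall>j\<in>{1..n}. P i j \<longleftrightarrow> Q (f i) (f j)))"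

definition part_listing :: "nat \<Rightarrow> (nat \<Rightarrow> nat \<Rightarrow> bool) \<Rightarrow> nat list \<Rightarrow> bool" where
  "part_listing n U w \<longleftrightarrow> length w = n \<and> poset_iso n (P_of w) U"

definition grevlex_less :: "nat list \<Rightarrow> nat list \<Rightarrow> bool" where
  "grevlex_less a b \<longleftrightarrow> length a = length b \<and>
     (sum_list a < sum_list b \<or>
      (sum_list a = sum_list b \<and>
       (\<exists>j < length a. take j a = take j b \<and> a ! j > b ! j)))"

definition area_sequence :: "nat \<Rightarrow> nat list \<Rightarrow> bool" where
  "area_sequence n a \<longleftrightarrow> length a = n \<and> (n > 0 \<longrightarrow> a ! 0 = 0) \<and>
     (\<forall>i. 0 < i \<and> i < n \<longrightarrow> a ! i \<le> a ! (i-1) + 1)"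

end

(* Listing the floors of the left endpoints x_i (shifted so that x_1 = 0), with the intervals
   sorted by fractional part and ties broken by decreasing floor, gives a part listing: when
   the floors differ by 1, x_i + 1 < x_j holds exactly when frac x_i < frac x_j.
   The grevlex-least part listing w minimises the sum and, among sequences of that sum, is
   lexicographically largest. If w_1 > 0, moving w_1 - 1 to the end gives a part listing of
   the same poset with smaller sum; if w_i \<ge> w_(i-1) + 2, swapping these two entries gives
   one with the same sum that is lexicographically larger. Hence w_1 = 0 and
   w_i \<le> w_(i-1) + 1. *)

theory Submission
  imports Defs "HOL-Library.List_Lexorder" "HOL-Library.Product_Lexorder" "HOL-Library.Multiset"
begin

lemma grevlex_less_iff:
  "grevlex_less a b \<longleftrightarrow> length a = length b \<and>
     (sum_list a < sum_list b \<or> sum_list a = sum_list b \<and> b < a)"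
proof -
  have "b < a \<longleftrightarrow> (\<exists>j < length a. take j a = take j b \<and> b ! j < a ! j)" if "length a = length b"
    using that unfolding list_less_def lexord_take_index_conv by (auto simp: eq_commute)
  then show ?thesis unfolding grevlex_less_def by auto
qed

lemma grevlex_less_asym: "grevlex_less a b \<Longrightarrow> \<not> grevlex_less b a"
  unfolding grevlex_less_iff by auto

lemma grevlex_least_exists:
  assumes "w0 \<in> S" and "\<And>w. w \<in> S \<Longrightarrow> length w = n"
  shows "\<exists>w\<in>S. \<forall>w'\<in>S. w' \<noteq> w \<longrightarrow> grevlex_less w w'"
proof -
  define s where "s = (LEAST s. \<exists>w\<in>S. sum_list w = s)"
  have s_attained: "\<exists>w\<in>S. sum_list w = s"
    unfolding s_def by (rule LeastI_ex) (use assms(1) in blast)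
  have s_least: "s \<le> sum_list w" if "w \<in> S" for w
    unfolding s_def by (rule Least_le) (use that in blast)
  define T where "T = {w\<in>S. sum_list w = s}"
  have "T \<subseteq> {xs. set xs \<subseteq> {0..s} \<and> length xs = n}"
    unfolding T_def using assms(2) member_le_sum_list by fastforce
  then have "finite T"
    by (rule finite_subset) (rule finite_lists_length_eq, simp)
  moreover have "T \<noteq> {}" using s_attained unfolding T_def by blast
  ultimately have max_in: "Max T \<in> T" and max_ge: "\<And>v. v \<in> T \<Longrightarrow> v \<le> Max T" by simp_all
  show ?thesis
  proof (intro bexI ballI impI)
    show "Max T \<in> S" using max_in unfolding T_def by simp
    fix w' assume w': "w' \<in> S" "w' \<noteq> Max T"
    have "sum_list (Max T) < sum_list w' \<or> sum_list (Max T) = sum_list w' \<and> w' < Max T"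
      using max_in max_ge[of w'] s_least[OF w'(1)] w' unfolding T_def by fastforce
    then show "grevlex_less (Max T) w'"
      unfolding grevlex_less_iff using max_in w'(1) assms(2) unfolding T_def by auto
  qed
qed

lemma grevlex_less_rotate_down:
  assumes "w \<noteq> []" and "w ! 0 \<noteq> 0"
  shows "grevlex_less (tl w @ [w ! 0 - 1]) w"
  using assms by (cases w) (auto simp: grevlex_less_iff)

lemma grevlex_less_swap_ascent:
  assumes "0 < i" "i < length w" "w ! (i - 1) < w ! i"
  shows "grevlex_less (w[i - 1 := w ! i, i := w ! (i - 1)]) w"
proof -
  let ?v = "w[i - 1 := w ! i, i := w ! (i - 1)]"
  have "mset ?v = mset w" using mset_swap[of i w "i - 1"] assms(1,2) by simp
  then have "sum_list ?v = sum_list w" by (metis sum_mset_sum_list)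
  moreover have "w < ?v"
    unfolding list_less_def lexord_take_index_conv using assms
    by (intro disjI2 exI[of _ "i - 1"]) (simp add: nth_list_update)
  ultimately show ?thesis unfolding grevlex_less_iff by simp
qed

lemma poset_iso_trans:
  assumes "poset_iso n P Q" and "poset_iso n Q R"
  shows "poset_iso n P R"
proof -
  obtain f where f: "bij_betw f {1..n} {1..n}" "\<forall>i\<in>{1..n}. \<forall>j\<in>{1..n}. P i j \<longleftrightarrow> Q (f i) (f j)"
    using assms(1) unfolding poset_iso_def by blast
  obtain g where g: "bij_betw g {1..n} {1..n}" "\<forall>i\<in>{1..n}. \<forall>j\<in>{1..n}. Q i j \<longleftrightarrow> R (g i) (g j)"
    using assms(2) unfolding poset_iso_def by blast
  have "\<forall>i\<in>{1..n}. f i \<in> {1..n}" using f(1) bij_betwE by blast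
  then show ?thesis unfolding poset_iso_def
    using bij_betw_trans[OF f(1) g(1)] f(2) g(2) by (intro exI[of _ "g \<circ> f"]) auto
qed

lemma part_listing_relabel:
  assumes "part_listing n U w" and "length v = n" and "bij_betw h {1..n} {1..n}"
    and "\<And>p q. p \<in> {1..n} \<Longrightarrow> q \<in> {1..n} \<Longrightarrow> P_of v p q \<longleftrightarrow> P_of w (h p) (h q)"
  shows "part_listing n U v"
proof -
  have "poset_iso n (P_of v) (P_of w)" unfolding poset_iso_def using assms(3,4) by blast
  then show ?thesis using assms(1,2) poset_iso_trans unfolding part_listing_def by blast
qed

lemma part_listing_rotate_down:
  assumes "part_listing n U w" and "0 < n" and "w ! 0 \<noteq> 0"
  shows "part_listing n U (tl w @ [w ! 0 - 1])"
proof -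
  let ?v = "tl w @ [w ! 0 - 1]"
  have len: "length w = n" using assms(1) unfolding part_listing_def by simp
  define h where "h p = (if p = n then 1 else p + 1)" for p
  have bij: "bij_betw h {1..n} {1..n}"
    by (rule bij_betw_byWitness[where f' = "\<lambda>q. if q = 1 then n else q - 1"])
      (use assms(2) in \<open>auto simp: h_def\<close>)
  have v_nth: "?v ! (p - 1) = (if p = n then w ! 0 - 1 else w ! p)" if "p \<in> {1..n}" for p
    using that len by (auto simp: nth_append nth_tl)
  show ?thesis
  proof (rule part_listing_relabel[OF assms(1) _ bij])
    show "length ?v = n" using len assms(2) by simp
    fix p q assume p: "p \<in> {1..n}" and q: "q \<in> {1..n}"
    show "P_of ?v p q \<longleftrightarrow> P_of w (h p) (h q)"
      unfolding P_of_def using p q len v_nth[OF p] v_nth[OF q] assms(3)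
      by (auto simp: h_def)
  qed
qed

lemma part_listing_swap_ascent:
  assumes "part_listing n U w" and "0 < i" "i < n" and "w ! (i - 1) + 2 \<le> w ! i"
  shows "part_listing n U (w[i - 1 := w ! i, i := w ! (i - 1)])"
proof -
  let ?v = "w[i - 1 := w ! i, i := w ! (i - 1)]"
  have len: "length w = n" using assms(1) unfolding part_listing_def by simp
  define h where "h p = (if p = i then i + 1 else if p = i + 1 then i else p)" for p
  have bij: "bij_betw h {1..n} {1..n}"
    by (rule bij_betw_byWitness[where f' = h]) (use assms(2,3) in \<open>auto simp: h_def\<close>)
  have v_nth: "?v ! (p - 1) = w ! (h p - 1)" if "p \<in> {1..n}" for p
    using that len assms(2,3) by (auto simp: h_def nth_list_update)
  show ?thesis
  proof (rule part_listing_relabel[OF assms(1) _ bij])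
    show "length ?v = n" using len by simp
    fix p q assume p: "p \<in> {1..n}" and q: "q \<in> {1..n}"
    have "h p \<in> {1..n}" "h q \<in> {1..n}" using bij p q bij_betwE by blast+
    moreover have "(p < q \<longleftrightarrow> h p < h q) \<or> {p, q} = {i, i + 1}" by (auto simp: h_def)
    moreover have "\<bar>int (w ! (h q - 1)) - int (w ! (h p - 1))\<bar> \<ge> 2" if "{p, q} = {i, i + 1}"
      using that assms(2,4) by (auto simp: h_def doubleton_eq_iff)
    ultimately show "P_of ?v p q \<longleftrightarrow> P_of w (h p) (h q)"
      unfolding P_of_def using p q len v_nth[OF p] v_nth[OF q] by auto
  qed
qed

lemma less_plus_one_iff_floor_frac:
  fixes a b :: real
  shows "a + 1 < b \<longleftrightarrow> \<lfloor>b\<rfloor> - \<lfloor>a\<rfloor> \<ge> 2 \<or> (\<lfloor>b\<rfloor> - \<lfloor>a\<rfloor> = 1 \<and> frac a < frac b)"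
  unfolding frac_def by linarith

lemma exists_sorting_bij:
  fixes key :: "nat \<Rightarrow> 'a::linorder"
  shows "\<exists>f. bij_betw f {1..n} {1..n} \<and>
           (\<forall>p\<in>{1..n}. \<forall>q\<in>{1..n}. p \<le> q \<longrightarrow> key (f p) \<le> key (f q))"
proof -
  define L where "L = sort_key key [1..<Suc n]"
  have "bij_betw ((!) L) {..<n} {1..n}"
    by (rule bij_betw_nth) (auto simp: L_def)
  moreover have "bij_betw (\<lambda>p. p - 1) {1..n} {..<n}"
    by (rule bij_betw_byWitness[where f' = Suc]) auto
  ultimately have "bij_betw (\<lambda>p. L ! (p - 1)) {1..n} {1..n}"
    using bij_betw_trans unfolding comp_def by blast
  moreover have "sorted (map key L)" unfolding L_def by simp
  then have "key (L ! (p - 1)) \<le> key (L ! (q - 1))" if "p \<in> {1..n}" "q \<in> {1..n}" "p \<le> q" for p q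
    using that sorted_nth_mono[of "map key L" "p - 1" "q - 1"] by (simp add: L_def)
  ultimately show ?thesis by blast
qed

lemma part_listing_of_points:
  fixes y :: "nat \<Rightarrow> real"
  assumes nonneg: "\<And>i. i \<in> {1..n} \<Longrightarrow> 0 \<le> y i"
    and U: "\<And>i j. U i j \<longleftrightarrow> i \<in> {1..n} \<and> j \<in> {1..n} \<and> y i + 1 < y j"
  shows "\<exists>w. part_listing n U w"
proof -
  define key where "key i = (frac (y i), - \<lfloor>y i\<rfloor>)" for i
  obtain f where bij: "bij_betw f {1..n} {1..n}"
    and sorted: "\<And>p q. p \<in> {1..n} \<Longrightarrow> q \<in> {1..n} \<Longrightarrow> p \<le> q \<Longrightarrow> key (f p) \<le> key (f q)"
    using exists_sorting_bij[of n key] by blast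
  define w where "w = map (\<lambda>p. nat \<lfloor>y (f p)\<rfloor>) [1..<Suc n]"
  have w_nth: "int (w ! (p - 1)) = \<lfloor>y (f p)\<rfloor>" if "p \<in> {1..n}" for p
    using that nonneg bij_betwE[OF bij] by (auto simp: w_def simp del: upt_Suc)
  have "P_of w p q \<longleftrightarrow> U (f p) (f q)" if p: "p \<in> {1..n}" and q: "q \<in> {1..n}" for p q
  proof -
    let ?d = "\<lfloor>y (f q)\<rfloor> - \<lfloor>y (f p)\<rfloor>"
    have "p < q \<longleftrightarrow> frac (y (f p)) < frac (y (f q))" if "?d = 1"
    proof
      assume "p < q"
      then show "frac (y (f p)) < frac (y (f q))"
        using sorted[OF p q] \<open>?d = 1\<close> by (auto simp: key_def less_eq_prod_def)
    next
      assume "frac (y (f p)) < frac (y (f q))"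
      then show "p < q"
        using sorted[OF q p] by (force simp: key_def less_eq_prod_def)
    qed
    then have "P_of w p q \<longleftrightarrow> ?d \<ge> 2 \<or> (?d = 1 \<and> frac (y (f p)) < frac (y (f q)))"
      unfolding P_of_def using p q w_nth[OF p] w_nth[OF q] by (auto simp: w_def)
    also have "\<dots> \<longleftrightarrow> U (f p) (f q)"
      using U less_plus_one_iff_floor_frac p q bij_betwE[OF bij] by blast
    finally show ?thesis .
  qed
  then have "part_listing n U w"
    unfolding part_listing_def poset_iso_def using bij by (auto simp: w_def)
  then show ?thesis by blast
qed

lemma part_listing_exists:
  assumes "unit_interval_order n U"
  shows "\<exists>w. part_listing n U w"
proof -
  obtain x :: "nat \<Rightarrow> real"
    where mono: "\<And>i j. 1 \<le> i \<and> i \<le> j \<and> j \<le> n \<Longrightarrow> x i \<le> x j"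
      and U: "\<And>i j. U i j \<longleftrightarrow> i \<in> {1..n} \<and> j \<in> {1..n} \<and> x i + 1 < x j"
    using assms unfolding unit_interval_order_def by blast
  show ?thesis
    by (rule part_listing_of_points[where y = "\<lambda>i. x i - x 1"]) (use mono U in auto)
qed

theorem mainTheorem10:
  fixes n :: nat and U :: "nat \<Rightarrow> nat \<Rightarrow> bool"
  assumes "unit_interval_order n U"
  shows "\<exists>w. part_listing n U w
            \<and> (\<forall>w'. part_listing n U w' \<and> w' \<noteq> w \<longrightarrow> grevlex_less w w')
            \<and> area_sequence n w"
proof -
  obtain w0 where "part_listing n U w0" using part_listing_exists[OF assms] by blast
  then have "\<exists>w\<in>Collect (part_listing n U). \<forall>w'\<in>Collect (part_listing n U).
               w' \<noteq> w \<longrightarrow> grevlex_less w w'"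
    by (rule grevlex_least_exists[OF CollectI]) (simp add: part_listing_def)
  then obtain w where w: "part_listing n U w"
    and least: "\<And>w'. part_listing n U w' \<Longrightarrow> w' \<noteq> w \<Longrightarrow> grevlex_less w w'"
    by blast
  have no_smaller: "\<not> grevlex_less v w" if "part_listing n U v" for v
    using least[OF that] grevlex_less_asym by blast
  have len: "length w = n" using w unfolding part_listing_def by simp
  have "w ! 0 = 0" if "0 < n"
  proof (rule ccontr)
    assume "w ! 0 \<noteq> 0"
    then show False
      using no_smaller[OF part_listing_rotate_down[OF w that]]
        grevlex_less_rotate_down[of w] len that by auto
  qed
  moreover have "w ! i \<le> w ! (i - 1) + 1" if "0 < i" "i < n" for i
  proof (rule ccontr)
    assume "\<not> w ! i \<le> w ! (i - 1) + 1"
    then show False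
      using no_smaller[OF part_listing_swap_ascent[OF w that]]
        grevlex_less_swap_ascent[of i w] len that by simp
  qed
  ultimately show ?thesis unfolding area_sequence_def using w least len by blast
qed

end
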